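(* Let $n\in\mathbb N$ and let $S$ be a well ordered subsemigroup of the nonnegative part $\{x\in\mathbb R^n\mid x\ge0\}$ of $\mathbb R^n$ with the lexicographic order. Suppose that $S$ has ordinal type $\le\omega^h$ for some $h\in\mathbb N$. Then $S$ has no accumulation point in $\mathbb R^n$ for the Euclidean topology.
   Context: $\omega$ denotes the ordinal type of $\mathbb N$. The lexicographic order on $\mathbb R^n$ compares first coordinates first. *)

theory Defs
  imports "HOL-Analysis.Analysis"
begin

text \<open>Lexicographic order on R^n, modelled as real ^ 'n where the index type 'n
  is finite and linearly ordered (its order gives the coordinate order:
  smaller indices are compared first).\<close>

definition lex_less :: "real ^ 'n::{finite,linorder} \<Rightarrow> real ^ 'n::{finite,linorder} \<Rightarrow> bool" where
  "lex_less x y \<longleftrightarrow> (\<exists>i. x $ i < y $ i \<and> (\<forall>j<i. x $ j = y $ j))"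

definition lex_le :: "real ^ 'n::{finite,linorder} \<Rightarrow> real ^ 'n::{finite,linorder} \<Rightarrow> bool" where
  "lex_le x y \<longleftrightarrow> x = y \<or> lex_less x y"

definition lex_rel :: "(real ^ 'n::{finite,linorder}) set \<Rightarrow> ((real ^ 'n::{finite,linorder}) \<times> (real ^ 'n::{finite,linorder})) set" where
  "lex_rel S = {(x, y). x \<in> S \<and> y \<in> S \<and> lex_le x y}"

text \<open>A canonical well order of ordinal type omega^h: N^h (lists of length h)
  with the lexicographic order (first coordinate most significant).\<close>
definition omega_pow :: "nat \<Rightarrow> (nat list \<times> nat list) set" where
  "omega_pow h = {(xs, ys). length xs = h \<and> length ys = h \<and>
      (xs = ys \<or> (\<exists>i<h. xs ! i < ys ! i \<and> (\<forall>j<i. xs ! j = ys ! j)))}"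

end

theory Submission
  imports Defs
begin

text \<open>
  Proof idea.  Suppose \<open>a\<close> is an accumulation point of \<open>S\<close>.

  Order side: a strictly monotone map \<open>f\<close> from \<open>S\<close> into \<open>\<nat>\<^sup>h\<close> (lexicographically
  ordered, i.e. \<open>\<omega>\<^sup>h\<close>) rules out points of "limit depth" \<open>h + 1\<close>, where depth 0
  means membership in \<open>S\<close> and depth \<open>m + 1\<close> means being the supremum of a cofinal
  sequence of points of depth \<open>m\<close>.  Between two such points the first coordinates
  of \<open>f\<close> must stabilise, one coordinate per level of depth.

  Geometric side: since \<open>S\<close> is well ordered, \<open>a\<close> is approached by a sequence
  \<open>s\<^sub>k \<in> S\<close> from below in the lexicographic order truncated at some coordinate
  \<open>p\<close>; nonnegativity makes \<open>a\<close> positive in that truncated order.  Using that \<open>S\<close>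
  is closed under addition, the least element of \<open>S\<close> not below \<open>c + m a\<close> (truncated
  at \<open>p\<close>) has depth \<open>m\<close> for every \<open>c \<in> S\<close>; with \<open>m = h + 1\<close> this contradicts the
  order side.
\<close>

section \<open>The lexicographic order on \<open>\<real>\<^sup>n\<close>\<close>

lemma lex_less_irrefl: "\<not> lex_less x x"
  by (auto simp: lex_less_def)

lemma lex_less_trans:
  assumes "lex_less x y" "lex_less y z" shows "lex_less x z"
proof -
  obtain p where p: "x$p < y$p" "\<forall>j<p. x$j = y$j" using assms(1) by (auto simp: lex_less_def)
  obtain q where q: "y$q < z$q" "\<forall>j<q. y$j = z$j" using assms(2) by (auto simp: lex_less_def)
  have "x $ min p q < z $ min p q \<and> (\<forall>j<min p q. x$j = z$j)"
    using p q by (cases p q rule: linorder_cases) auto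
  then show ?thesis unfolding lex_less_def by blast
qed

lemma lex_less_asym: "lex_less x y \<Longrightarrow> \<not> lex_less y x"
  using lex_less_trans lex_less_irrefl by blast

lemma transp_lex_less: "transp lex_less"
  by (rule transpI) (rule lex_less_trans)

lemma lex_less_total:
  assumes "x \<noteq> y" shows "lex_less x y \<or> lex_less y x"
proof -
  let ?D = "{j. x$j \<noteq> y$j}"
  have ne: "?D \<noteq> {}" using assms by (auto simp: vec_eq_iff)
  define i where "i = Min ?D"
  have "x$i \<noteq> y$i" using Min_in[OF _ ne] i_def by auto
  moreover have "\<forall>j<i. x$j = y$j" "\<forall>j<i. y$j = x$j"
    using Min_le[of ?D] i_def by (metis (mono_tags) finite mem_Collect_eq leD)+
  ultimately show ?thesis unfolding lex_less_def by (meson linorder_neqE)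
qed

lemma lex_le_total: "\<not> lex_less x y \<Longrightarrow> lex_le y x"
  using lex_less_total unfolding lex_le_def by blast

lemma lex_less_add: "lex_less (x + z) (y + z) \<longleftrightarrow> lex_less x y"
  by (simp add: lex_less_def)

section \<open>Points of limit depth and ordinals below \<open>\<omega>\<^sup>h\<close>\<close>

definition lex_list_less :: "nat \<Rightarrow> nat list \<Rightarrow> nat list \<Rightarrow> bool" where
  "lex_list_less h u v \<longleftrightarrow> (\<exists>i<h. u!i < v!i \<and> (\<forall>j<i. u!j = v!j))"

definition agree :: "nat \<Rightarrow> nat list \<Rightarrow> nat list \<Rightarrow> bool" where
  "agree p u v \<longleftrightarrow> (\<forall>j<p. u!j = v!j)"

lemma lex_list_less_irrefl: "\<not> lex_list_less h u u"
  by (auto simp: lex_list_less_def)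

lemma agree_between:
  assumes "lex_list_less h u y" "lex_list_less h y v" "agree p u v" shows "agree p u y"
proof (rule ccontr)
  assume na: "\<not> agree p u y"
  obtain q where q: "u!q < y!q" "\<forall>j<q. u!j = y!j" using assms(1) by (auto simp: lex_list_less_def)
  obtain q' where q': "y!q' < v!q'" "\<forall>j<q'. y!j = v!j" using assms(2) by (auto simp: lex_list_less_def)
  have "q < p" using na q(2) unfolding agree_def by (meson not_less order_less_le_trans)
  then have "u!q = v!q" "\<forall>j<q. u!j = v!j" using assms(3) by (auto simp: agree_def)
  then show False using q q' by (cases q' q rule: linorder_cases) auto
qed

lemma nth_le_of_agree:
  assumes "lex_list_less h u w" "agree L u w" shows "u!L \<le> w!L"
proof -
  obtain q where q: "u!q < w!q" "\<forall>j<q. u!j = w!j" using assms(1) by (auto simp: lex_list_less_def)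
  then show ?thesis using assms(2) by (cases q L rule: linorder_cases) (auto simp: agree_def)
qed

fun limit_depth :: "('a \<Rightarrow> 'a \<Rightarrow> bool) \<Rightarrow> 'a set \<Rightarrow> nat \<Rightarrow> 'a \<Rightarrow> bool" where
  "limit_depth lt S 0 b \<longleftrightarrow> b \<in> S"
| "limit_depth lt S (Suc m) b \<longleftrightarrow> b \<in> S \<and> (\<exists>c :: nat \<Rightarrow> 'a. (\<forall>k. limit_depth lt S m (c k)) \<and>
     (\<forall>k. lt (c k) b) \<and> (\<forall>x\<in>S. lt x b \<longrightarrow> (\<exists>k. lt x (c k))))"

lemma limit_depth_in: "limit_depth lt S m b \<Longrightarrow> b \<in> S"
  by (cases m) auto

text \<open>
  If all points strictly between \<open>x\<close> and a point \<open>b\<close> of depth \<open>m + 1\<close> share the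
  first \<open>L\<close> entries of \<open>f b\<close>, then the entry \<open>L\<close> is bounded on them; taking a
  point of depth \<open>m\<close> where it is maximal and a larger one from the cofinal sequence
  gives two points of depth \<open>m\<close> sharing the first \<open>L + 1\<close> entries.
\<close>
lemma limit_depth_pair:
  assumes mono: "\<forall>x\<in>S. \<forall>y\<in>S. lt x y \<longrightarrow> lex_list_less h (f x) (f y)"
    and trans: "transp lt"
    and D: "limit_depth lt S (Suc m) b" and xS: "x \<in> S" and xb: "lt x b"
    and prefix: "\<forall>y\<in>S. lt x y \<and> lt y b \<longrightarrow> agree L (f y) (f b)"
  shows "\<exists>t t'. limit_depth lt S m t \<and> limit_depth lt S m t' \<and> lt t t' \<and>
    lt x t \<and> lt t' b \<and> agree (Suc L) (f t) (f t')"
proof -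
  obtain c where c_depth: "\<forall>k::nat. limit_depth lt S m (c k)" and c_below: "\<forall>k. lt (c k) b"
    and c_cofinal: "\<forall>x\<in>S. lt x b \<longrightarrow> (\<exists>k. lt x (c k))"
    using D unfolding limit_depth.simps(2) by blast
  have bS: "b \<in> S" using limit_depth_in[OF D] .
  define P where "P = {y. limit_depth lt S m y \<and> lt x y \<and> lt y b}"
  have P_S: "P \<subseteq> S" unfolding P_def by (auto intro: limit_depth_in)
  have P_agree: "agree L (f y) (f b)" if "y \<in> P" for y using prefix that P_S P_def by blast
  obtain k0 where "lt x (c k0)" using c_cofinal xS xb by blast
  then have "c k0 \<in> P" unfolding P_def using c_depth c_below by blast
  define V where "V = (\<lambda>y. f y ! L) ` P"
  have "V \<subseteq> {..f b ! L}"
  proof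
    fix v assume "v \<in> V"
    then obtain y where y: "y \<in> P" "v = f y ! L" unfolding V_def by blast
    have "lex_list_less h (f y) (f b)" using mono y(1) P_S bS unfolding P_def by blast
    then show "v \<in> {..f b ! L}" using nth_le_of_agree P_agree y by simp
  qed
  then have "finite V" by (rule finite_subset) simp
  moreover have "V \<noteq> {}" using \<open>c k0 \<in> P\<close> unfolding V_def by blast
  ultimately have "Max V \<in> V" and V_max: "\<forall>v\<in>V. v \<le> Max V" by simp_all
  then obtain t where t: "t \<in> P" and t_max: "\<forall>y\<in>P. f y ! L \<le> f t ! L"
    unfolding V_def by auto
  then obtain k where tk: "lt t (c k)" using c_cofinal P_S P_def by blast
  have ck: "c k \<in> P"
    using t tk c_depth c_below transpD[OF trans] unfolding P_def by blast
  have ag: "agree L (f t) (f (c k))" using P_agree t ck by (simp add: agree_def)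
  have "f t ! L \<le> f (c k) ! L" using nth_le_of_agree[OF _ ag] mono tk t ck P_S by blast
  with t_max ck have "f t ! L = f (c k) ! L" by (simp add: le_antisym)
  with ag have "agree (Suc L) (f t) (f (c k))" by (auto simp: agree_def less_Suc_eq)
  then show ?thesis using t tk ck unfolding P_def by blast
qed

lemma limit_depth_varies:
  assumes len: "\<forall>x\<in>S. length (f x) = h"
    and mono: "\<forall>x\<in>S. \<forall>y\<in>S. lt x y \<longrightarrow> lex_list_less h (f x) (f y)"
    and trans: "transp lt"
  shows "m \<le> h \<Longrightarrow> limit_depth lt S (Suc m) b \<Longrightarrow> x \<in> S \<Longrightarrow> lt x b \<Longrightarrow>
    \<exists>y\<in>S. lt x y \<and> lt y b \<and> \<not> agree (h - m) (f y) (f b)"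
proof (induction m arbitrary: b x)
  case 0
  then obtain c where "\<forall>k::nat. c k \<in> S" "\<forall>k. lt (c k) b" "\<exists>k. lt x (c k)"
    unfolding limit_depth.simps by blast
  then obtain y where y: "y \<in> S" "lt x y" "lt y b" by blast
  have "b \<in> S" using limit_depth_in[OF "0.prems"(2)] .
  have "\<not> agree h (f y) (f b)"
  proof
    assume "agree h (f y) (f b)"
    then have "f y = f b" using len y(1) \<open>b \<in> S\<close> by (auto simp: agree_def intro: nth_equalityI)
    then show False using mono y \<open>b \<in> S\<close> lex_list_less_irrefl by metis
  qed
  then show ?case using y by auto
next
  case (Suc m)
  show ?case
  proof (rule ccontr)
    assume "\<not> ?case"
    then have "\<forall>y\<in>S. lt x y \<and> lt y b \<longrightarrow> agree (h - Suc m) (f y) (f b)" by blast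
    from limit_depth_pair[OF mono trans Suc.prems(2-4) this]
    obtain t t' where tt: "limit_depth lt S (Suc m) t" "limit_depth lt S (Suc m) t'"
      "lt t t'" "agree (h - m) (f t) (f t')"
      using Suc.prems(1) Suc_diff_Suc by fastforce
    have tS: "t \<in> S" "t' \<in> S" using limit_depth_in[OF tt(1)] limit_depth_in[OF tt(2)] .
    obtain y where y: "y \<in> S" "lt t y" "lt y t'" "\<not> agree (h - m) (f y) (f t')"
      using Suc.IH[OF _ tt(2) tS(1) tt(3)] Suc.prems(1) by auto
    have "agree (h - m) (f t) (f y)"
      using agree_between[OF _ _ tt(4)] mono y tS by blast
    then show False using y(4) tt(4) by (auto simp: agree_def)
  qed
qed

theorem no_limit_depth_Suc:
  assumes len: "\<forall>x\<in>S. length (f x) = h"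
    and mono: "\<forall>x\<in>S. \<forall>y\<in>S. lt x y \<longrightarrow> lex_list_less h (f x) (f y)"
    and trans: "transp lt"
  shows "\<not> limit_depth lt S (Suc h) b"
proof
  assume D: "limit_depth lt S (Suc h) b"
  then obtain c :: "nat \<Rightarrow> 'a" where "c 0 \<in> S" "lt (c 0) b"
    unfolding limit_depth.simps(2) by (blast intro: limit_depth_in)
  then show False
    using limit_depth_varies[OF len mono trans order_refl D] by (simp add: agree_def)
qed

lemma omega_pow_embedding:
  assumes wo: "Well_order (lex_rel S)" and ordtype: "(lex_rel S, omega_pow h) \<in> ordLeq"
  obtains f where "\<forall>x\<in>S. length (f x) = h"
    and "\<forall>x\<in>S. \<forall>y\<in>S. lex_less x y \<longrightarrow> lex_list_less h (f x) (f y)"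
proof -
  from ordtype obtain f where emb: "embed (lex_rel S) (omega_pow h) f"
    unfolding ordLeq_def by blast
  have refl: "(x, x) \<in> lex_rel S" if "x \<in> S" for x using that by (simp add: lex_rel_def lex_le_def)
  then have "S \<subseteq> Field (lex_rel S)" by (auto intro: FieldI1)
  then have inj: "inj_on f S" using embed_inj_on[OF wo emb] by (rule inj_on_subset[rotated])
  have cmp: "(f x, f y) \<in> omega_pow h" if "(x, y) \<in> lex_rel S" for x y
    using embed_compat[OF emb] that unfolding compat_def by blast
  show ?thesis
  proof
    show "\<forall>x\<in>S. length (f x) = h" using cmp refl by (auto simp: omega_pow_def)
    show "\<forall>x\<in>S. \<forall>y\<in>S. lex_less x y \<longrightarrow> lex_list_less h (f x) (f y)"
    proof (intro ballI impI)
      fix x y assume xy: "x \<in> S" "y \<in> S" "lex_less x y"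
      then have "(f x, f y) \<in> omega_pow h" by (intro cmp) (simp add: lex_rel_def lex_le_def)
      moreover have "f x \<noteq> f y" using xy inj lex_less_irrefl by (metis inj_on_def)
      ultimately show "lex_list_less h (f x) (f y)" by (simp add: omega_pow_def lex_list_less_def)
    qed
  qed
qed

section \<open>The lexicographic order truncated at a coordinate\<close>

definition trunc :: "'n::{finite,linorder} \<Rightarrow> real ^ 'n::{finite,linorder} \<Rightarrow> real ^ 'n::{finite,linorder}" where
  "trunc i x = (\<chi> j. if j \<le> i then x $ j else 0)"

definition lex_less_upto ::
    "'n::{finite,linorder} \<Rightarrow> real ^ 'n::{finite,linorder} \<Rightarrow> real ^ 'n::{finite,linorder} \<Rightarrow> bool"
  where
  "lex_less_upto i u v \<longleftrightarrow> lex_less (trunc i u) (trunc i v)"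

lemma lex_less_upto_iff:
  "lex_less_upto i u v \<longleftrightarrow> (\<exists>q\<le>i. u$q < v$q \<and> (\<forall>j<q. u$j = v$j))"
proof
  assume "lex_less_upto i u v"
  then obtain q where q: "trunc i u $ q < trunc i v $ q" "\<forall>j<q. trunc i u $ j = trunc i v $ j"
    by (auto simp: lex_less_upto_def lex_less_def)
  have qi: "q \<le> i" using q(1) by (auto simp: trunc_def split: if_splits)
  moreover have "u$q < v$q" using q(1) qi by (simp add: trunc_def)
  moreover have "u$j = v$j" if "j < q" for j
    using q(2)[rule_format, OF that] less_imp_le[OF less_le_trans[OF that qi]] by (simp add: trunc_def)
  ultimately show "\<exists>q\<le>i. u$q < v$q \<and> (\<forall>j<q. u$j = v$j)" by blast
next
  assume "\<exists>q\<le>i. u$q < v$q \<and> (\<forall>j<q. u$j = v$j)"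
  then obtain q where "q \<le> i" "u$q < v$q" "\<forall>j<q. u$j = v$j" by blast
  then show "lex_less_upto i u v"
    unfolding lex_less_upto_def lex_less_def by (auto simp: trunc_def intro!: exI[of _ q])
qed

lemma lex_less_upto_add: "lex_less_upto i (u + w) (v + w) \<longleftrightarrow> lex_less_upto i u v"
proof -
  have "trunc i (x + w) = trunc i x + trunc i w" for x by (simp add: trunc_def vec_eq_iff)
  then show ?thesis by (simp add: lex_less_upto_def lex_less_add)
qed

lemma lex_less_upto_asym: "lex_less_upto i u v \<Longrightarrow> \<not> lex_less_upto i v u"
  unfolding lex_less_upto_def by (rule lex_less_asym)

lemma lex_less_upto_imp_lex_less:
  assumes "lex_less_upto i u v" shows "lex_less u v"
  using assms unfolding lex_less_upto_iff lex_less_def by blast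

lemma lex_less_upto_not_less_trans:
  "lex_less_upto i u v \<Longrightarrow> \<not> lex_less_upto i w v \<Longrightarrow> lex_less_upto i u w"
  unfolding lex_less_upto_def using lex_le_total lex_less_trans unfolding lex_le_def by metis

text \<open>Transfers nonnegativity: \<open>0 \<le> s\<^sub>k\<close> and \<open>s\<^sub>k\<close> below \<open>a\<close> make \<open>a\<close> positive up to \<open>p\<close>.\<close>
lemma lex_le_lex_less_upto_trans:
  assumes "lex_le u v" "lex_less_upto i v w" shows "lex_less_upto i u w"
proof -
  have "\<not> lex_less_upto i v u"
    using assms(1) lex_less_upto_imp_lex_less lex_less_asym lex_less_irrefl unfolding lex_le_def by blast
  then show ?thesis
    using assms(2) lex_le_total lex_less_trans unfolding lex_less_upto_def lex_le_def by metis
qed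

section \<open>Sequences approaching a point from below\<close>

definition approaches_below ::
    "'n::{finite,linorder} \<Rightarrow> (nat \<Rightarrow> real ^ 'n::{finite,linorder}) \<Rightarrow> real ^ 'n::{finite,linorder} \<Rightarrow> bool"
  where
  "approaches_below p s a \<longleftrightarrow> (\<forall>k. (\<forall>j<p. s k $ j = a $ j) \<and> s k $ p < a $ p) \<and>
     (\<lambda>k. s k $ p) \<longlonglongrightarrow> a $ p"

lemma approaches_below_less: "approaches_below p s a \<Longrightarrow> lex_less_upto p (s k) a"
  unfolding approaches_below_def lex_less_upto_iff by blast

lemma approaches_below_cofinal:
  assumes app: "approaches_below p s a" and ya: "lex_less_upto p y a"
  shows "\<exists>k. lex_less_upto p y (s k)"
proof -
  have eq: "\<forall>j<p. s k $ j = a $ j" and lim: "(\<lambda>k. s k $ p) \<longlonglongrightarrow> a $ p" for k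
    using app by (auto simp: approaches_below_def)
  obtain q where q: "q \<le> p" "y$q < a$q" "\<forall>j<q. y$j = a$j" using ya unfolding lex_less_upto_iff by blast
  show ?thesis
  proof (cases "q = p")
    case True
    then obtain k where "y$p < s k $ p" using order_tendstoD(1)[OF lim q(2)[unfolded True]] eventually_sequentially by force
    then show ?thesis using q(3) eq True unfolding lex_less_upto_iff
      by (intro exI[of _ k] exI[of _ p]) auto
  next
    case False
    then show ?thesis using q eq unfolding lex_less_upto_iff by (metis less_le_trans order_le_neq_trans)
  qed
qed

lemma approaches_below_scale:
  assumes "approaches_below p s a" "0 < c"
  shows "approaches_below p (\<lambda>k. c *\<^sub>R s k) (c *\<^sub>R a)"
  using assms tendsto_mult_left[of "\<lambda>k. s k $ p" "a $ p" sequentially c]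
  by (simp add: approaches_below_def)

lemma approaches_below_multiple:
  assumes app: "approaches_below p s a" and ya: "lex_less_upto p y a"
  shows "\<exists>k. lex_less_upto p (y + real m *\<^sub>R a) (real (Suc m) *\<^sub>R s k)"
proof -
  have "lex_less_upto p (y + real m *\<^sub>R a) (a + real m *\<^sub>R a)"
    using ya by (simp only: lex_less_upto_add)
  also have "a + real m *\<^sub>R a = real (Suc m) *\<^sub>R a" by (simp add: algebra_simps)
  finally show ?thesis
    using approaches_below_cofinal[OF approaches_below_scale[OF app]] by simp
qed

section \<open>Accumulation points of a well-ordered set\<close>

lemma lex_rel_least:
  assumes wo: "Well_order (lex_rel S)" and BS: "B \<subseteq> S" and x: "x \<in> B"
  obtains z where "z \<in> B" "\<forall>y\<in>B. lex_le z y"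
proof -
  have "wf (lex_rel S - Id)" using wo by (simp add: well_order_on_def)
  then obtain z where z: "z \<in> B" "\<forall>y. (y, z) \<in> lex_rel S - Id \<longrightarrow> y \<notin> B"
    using x unfolding wf_eq_minimal by blast
  have "lex_le z y" if "y \<in> B" for y
  proof (rule ccontr)
    assume "\<not> lex_le z y"
    then have "y \<noteq> z" "lex_less y z" using lex_le_total by (auto simp: lex_le_def)
    then have "(y, z) \<in> lex_rel S - Id" using BS that z(1) by (auto simp: lex_rel_def lex_le_def)
    then show False using z(2) that by blast
  qed
  then show ?thesis using z(1) that by blast
qed

text \<open>A well-ordered set contains no infinite family converging to \<open>a\<close> from above at coordinate \<open>p\<close>:
  its least member would have later members below it.\<close>
lemma no_approach_from_above:
  assumes wo: "Well_order (lex_rel S)" and J: "infinite J"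
    and above: "\<forall>n\<in>J. x n \<in> S \<and> (\<forall>j<p. x n $ j = a $ j) \<and> a $ p < x n $ p"
    and lim: "(\<lambda>n. x n $ p) \<longlonglongrightarrow> a $ p"
  shows False
proof -
  obtain n0 where "n0 \<in> J" using infinite_imp_nonempty[OF J] by blast
  then obtain z where z: "z \<in> x ` J" "\<forall>y\<in>x ` J. lex_le z y"
    using lex_rel_least[OF wo, of "x ` J"] above by blast
  then obtain K where K: "K \<in> J" "z = x K" by blast
  then have "a $ p < x K $ p" using above by blast
  then obtain N where N: "\<forall>n\<ge>N. x n $ p < x K $ p"
    using order_tendstoD(2)[OF lim] unfolding eventually_sequentially by blast
  obtain n where n: "N \<le> n" "n \<in> J" using J unfolding infinite_nat_iff_unbounded_le by blast
  have "lex_less (x n) (x K)"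
    using N n K(1) above unfolding lex_less_def by (intro exI[of _ p]) auto
  moreover have "lex_le (x K) (x n)" using z(2) K n(2) by blast
  ultimately show False using lex_less_asym lex_less_irrefl unfolding lex_le_def by metis
qed

text \<open>
  An accumulation point of a well-ordered \<open>S\<close> is approached from below: pick a sequence
  in \<open>S - {a}\<close> converging to \<open>a\<close>; infinitely many of its terms first differ from \<open>a\<close>
  at the same coordinate \<open>p\<close> and on the same side, and that side cannot be above.
\<close>
lemma islimpt_approached_below:
  assumes wo: "Well_order (lex_rel S)" and la: "a islimpt S"
  obtains p s where "\<forall>k. s k \<in> S" "approaches_below p s a"
proof -
  obtain x where x: "\<forall>n. x n \<in> S - {a}" and lim: "x \<longlonglongrightarrow> a"
    using la unfolding islimpt_sequential by blast
  let ?side = "\<lambda>n q below. (\<forall>j<q. x n $ j = a $ j) \<and>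
    (if below then x n $ q < a $ q else a $ q < x n $ q)"
  have "\<exists>g. ?side n (fst g) (snd g)" for n
  proof -
    have "lex_less (x n) a \<or> lex_less a (x n)" using x lex_less_total by blast
    then show ?thesis unfolding lex_less_def by (metis (no_types, lifting) fst_conv snd_conv)
  qed
  then obtain g where g: "\<And>n. ?side n (fst (g n)) (snd (g n))" by metis
  have "finite (range g)" by (rule finite_subset[OF subset_UNIV]) simp
  then obtain n0 where "infinite {n. g n = g n0}"
    using pigeonhole_infinite[of UNIV g] by auto
  then obtain p below where J: "infinite {n. g n = (p, below)}" by (metis surj_pair)
  have J_side: "?side n p below" if "n \<in> {n. g n = (p, below)}" for n
  proof -
    have "g n = (p, below)" using that by simp
    from g[of n] show ?thesis unfolding \<open>g n = (p, below)\<close> fst_conv snd_conv .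
  qed
  have lim_p: "(\<lambda>n. x n $ p) \<longlonglongrightarrow> a $ p" using lim by (rule tendsto_vec_nth)
  show ?thesis
  proof (cases below)
    case False
    then show ?thesis using no_approach_from_above[OF wo J _ lim_p] J_side x by auto
  next
    case True
    then obtain r :: "nat \<Rightarrow> nat" where r: "strict_mono r" "\<forall>k. r k \<in> {n. g n = (p, below)}"
      using infinite_enumerate[OF J] by blast
    have "approaches_below p (x \<circ> r) a"
      unfolding approaches_below_def
      using J_side r(2) True LIMSEQ_subseq_LIMSEQ[OF lim_p r(1)] by (auto simp: comp_def)
    moreover have "\<forall>k. (x \<circ> r) k \<in> S" using x by simp
    ultimately show ?thesis using that by blast
  qed
qed

section \<open>Deep points of a well-ordered subsemigroup\<close>

lemma semigroup_multiple:
  fixes S :: "'a::real_vector set"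
  assumes sg: "\<forall>x\<in>S. \<forall>y\<in>S. x + y \<in> S" and y: "y \<in> S"
  shows "real (Suc m) *\<^sub>R y \<in> S"
proof (induction m)
  case 0
  show ?case using y by simp
next
  case (Suc m)
  have "real (Suc (Suc m)) *\<^sub>R y = y + real (Suc m) *\<^sub>R y"
    by (simp only: of_nat_Suc[of "Suc m"] scaleR_add_left scaleR_one)
  then show ?case using sg y Suc by simp
qed

definition least_not_below ::
    "(real ^ 'n::{finite,linorder}) set \<Rightarrow> 'n::{finite,linorder} \<Rightarrow> real ^ 'n::{finite,linorder} \<Rightarrow> real ^ 'n::{finite,linorder}"
  where "least_not_below S i t = (SOME e. e \<in> S \<and> \<not> lex_less_upto i e t \<and>
      (\<forall>y\<in>S. \<not> lex_less_upto i y t \<longrightarrow> lex_le e y))"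

lemma least_not_below:
  assumes wo: "Well_order (lex_rel S)" and ex: "\<exists>x\<in>S. \<not> lex_less_upto i x t"
  shows "least_not_below S i t \<in> S" "\<not> lex_less_upto i (least_not_below S i t) t"
    "\<And>y. y \<in> S \<Longrightarrow> \<not> lex_less_upto i y t \<Longrightarrow> lex_le (least_not_below S i t) y"
proof -
  obtain x where "x \<in> {y\<in>S. \<not> lex_less_upto i y t}" using ex by blast
  then obtain z where "z \<in> {y\<in>S. \<not> lex_less_upto i y t}"
    "\<forall>y\<in>{y\<in>S. \<not> lex_less_upto i y t}. lex_le z y"
    using lex_rel_least[OF wo, of "{y\<in>S. \<not> lex_less_upto i y t}"] by blast
  then have "z \<in> S \<and> \<not> lex_less_upto i z t \<and> (\<forall>y\<in>S. \<not> lex_less_upto i y t \<longrightarrow> lex_le z y)"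
    by blast
  then have "least_not_below S i t \<in> S \<and> \<not> lex_less_upto i (least_not_below S i t) t \<and>
      (\<forall>y\<in>S. \<not> lex_less_upto i y t \<longrightarrow> lex_le (least_not_below S i t) y)"
    unfolding least_not_below_def by (rule someI)
  then show "least_not_below S i t \<in> S" "\<not> lex_less_upto i (least_not_below S i t) t"
    "\<And>y. y \<in> S \<Longrightarrow> \<not> lex_less_upto i y t \<Longrightarrow> lex_le (least_not_below S i t) y" by blast+
qed

locale approached_point =
  fixes S :: "(real ^ 'n::{finite,linorder}) set" and p :: "'n::{finite,linorder}"
    and s :: "nat \<Rightarrow> real ^ 'n::{finite,linorder}" and a :: "real ^ 'n::{finite,linorder}"
  assumes subsemigroup: "\<forall>x\<in>S. \<forall>y\<in>S. x + y \<in> S"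
    and well_ordered: "Well_order (lex_rel S)"
    and s_in: "\<And>k. s k \<in> S"
    and approaches: "approaches_below p s a"
    and positive: "lex_less_upto p 0 a"
begin

text \<open>Every \<open>c + m a\<close> with \<open>c \<in> S\<close> is exceeded by an element of \<open>S\<close>, namely \<open>c + (m + 1) s\<^sub>k\<close>.\<close>
lemma exists_not_below:
  assumes c: "c \<in> S" shows "\<exists>x\<in>S. \<not> lex_less_upto p x (c + real m *\<^sub>R a)"
proof -
  obtain k where "lex_less_upto p (0 + real m *\<^sub>R a) (real (Suc m) *\<^sub>R s k)"
    using approaches_below_multiple[OF approaches positive] by blast
  then have "lex_less_upto p (real m *\<^sub>R a + c) (real (Suc m) *\<^sub>R s k + c)"
    by (simp add: lex_less_upto_add)
  then have "\<not> lex_less_upto p (c + real (Suc m) *\<^sub>R s k) (c + real m *\<^sub>R a)"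
    using lex_less_upto_asym by (simp add: add.commute)
  moreover have "c + real (Suc m) *\<^sub>R s k \<in> S"
    using subsemigroup c semigroup_multiple[OF subsemigroup s_in] by blast
  ultimately show ?thesis by blast
qed

abbreviation deep_point :: "real ^ 'n::{finite,linorder} \<Rightarrow> nat \<Rightarrow> real ^ 'n::{finite,linorder}" where
  "deep_point c m \<equiv> least_not_below S p (c + real m *\<^sub>R a)"

lemma deep_point:
  assumes "c \<in> S"
  shows "deep_point c m \<in> S" "\<not> lex_less_upto p (deep_point c m) (c + real m *\<^sub>R a)"
    "\<And>y. y \<in> S \<Longrightarrow> \<not> lex_less_upto p y (c + real m *\<^sub>R a) \<Longrightarrow> lex_le (deep_point c m) y"
  using least_not_below[OF well_ordered exists_not_below[OF assms]] by blast+

text \<open>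
  The points \<open>e\<^sub>k = deep_point (c + s\<^sub>k) m\<close> lie below \<open>b = deep_point c (m + 1)\<close>:
  some \<open>c + (m + 1) s\<^sub>j\<close> in \<open>S\<close> lies above \<open>c + s\<^sub>k + m a\<close> and below \<open>c + (m + 1) a\<close>.
\<close>
lemma deep_point_shift_less:
  assumes c: "c \<in> S" shows "lex_less (deep_point (c + s k) m) (deep_point c (Suc m))"
proof -
  obtain j where j: "lex_less_upto p (s k + real m *\<^sub>R a) (real (Suc m) *\<^sub>R s j)"
    using approaches_below_multiple[OF approaches approaches_below_less[OF approaches]] by blast
  define z where "z = c + real (Suc m) *\<^sub>R s j"
  have zS: "z \<in> S" unfolding z_def using subsemigroup c semigroup_multiple[OF subsemigroup s_in] by blast
  have "lex_less_upto p (s k + real m *\<^sub>R a + c) (real (Suc m) *\<^sub>R s j + c)"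
    using j by (simp only: lex_less_upto_add)
  then have "\<not> lex_less_upto p z (c + s k + real m *\<^sub>R a)"
    using lex_less_upto_asym unfolding z_def by (simp add: algebra_simps)
  then have "lex_le (deep_point (c + s k) m) z" using deep_point(3) c s_in subsemigroup zS by blast
  moreover have "lex_less_upto p (real (Suc m) *\<^sub>R s j + c) (real (Suc m) *\<^sub>R a + c)"
    using approaches_below_less[OF approaches_below_scale[OF approaches]] by (simp add: lex_less_upto_add)
  then have "lex_less_upto p z (c + real (Suc m) *\<^sub>R a)" unfolding z_def by (simp add: add.commute)
  then have "lex_less z (deep_point c (Suc m))"
    using lex_less_upto_not_less_trans deep_point(2)[OF c] lex_less_upto_imp_lex_less by blast
  ultimately show ?thesis using lex_less_trans unfolding lex_le_def by blast
qed

text \<open>Conversely the \<open>e\<^sub>k\<close> are cofinal below \<open>b\<close>, because the \<open>s\<^sub>k\<close> are cofinal below \<open>a\<close>.\<close>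
lemma deep_point_shift_cofinal:
  assumes c: "c \<in> S" and x: "x \<in> S" "lex_less x (deep_point c (Suc m))"
  shows "\<exists>k. lex_less x (deep_point (c + s k) m)"
proof -
  define w where "w = c + real m *\<^sub>R a"
  have "lex_less_upto p x (c + real (Suc m) *\<^sub>R a)"
    using deep_point(3)[OF c x(1)] x(2) lex_less_asym lex_less_irrefl unfolding lex_le_def by blast
  then have "lex_less_upto p (x - w + w) (a + w)" unfolding w_def by (simp add: algebra_simps)
  then have "lex_less_upto p (x - w) a" by (simp only: lex_less_upto_add)
  then obtain k where "lex_less_upto p (x - w) (s k)" using approaches_below_cofinal[OF approaches] by blast
  then have "lex_less_upto p (x - w + w) (s k + w)" by (simp only: lex_less_upto_add)
  then have "lex_less_upto p x (c + s k + real m *\<^sub>R a)" unfolding w_def by (simp add: algebra_simps)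
  then have "lex_less_upto p x (deep_point (c + s k) m)"
    using lex_less_upto_not_less_trans deep_point(2) c s_in subsemigroup by blast
  then show ?thesis using lex_less_upto_imp_lex_less by blast
qed

lemma deep_point_limit_depth: "c \<in> S \<Longrightarrow> limit_depth lex_less S m (deep_point c m)"
proof (induction m arbitrary: c)
  case 0
  show ?case by (simp only: limit_depth.simps(1)) (rule deep_point(1)[OF 0])
next
  case (Suc m)
  have "c + s k \<in> S" for k using subsemigroup Suc.prems s_in by blast
  then show ?case
    unfolding limit_depth.simps(2)
  proof (intro conjI exI[of _ "\<lambda>k. deep_point (c + s k) m"] allI ballI impI)
    show "deep_point c (Suc m) \<in> S" using deep_point(1)[OF Suc.prems] .
  qed (use Suc.IH deep_point_shift_less[OF Suc.prems] deep_point_shift_cofinal[OF Suc.prems] in auto)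
qed

end

theorem mainTheorem5:
  fixes S :: "(real ^ 'n::{finite,linorder}) set" and h :: nat
  assumes nonneg: "\<forall>x\<in>S. lex_le 0 x"
    and subsemigroup: "\<forall>x\<in>S. \<forall>y\<in>S. x + y \<in> S"
    and well_ordered: "Well_order (lex_rel S)"
    and ordtype: "(lex_rel S, omega_pow h) \<in> ordLeq"
  shows "\<not> (\<exists>a. a islimpt S)"
proof
  assume "\<exists>a. a islimpt S"
  then obtain a where "a islimpt S" ..
  obtain f where len: "\<forall>x\<in>S. length (f x) = h"
    and mono: "\<forall>x\<in>S. \<forall>y\<in>S. lex_less x y \<longrightarrow> lex_list_less h (f x) (f y)"
    using omega_pow_embedding[OF well_ordered ordtype] by blast
  obtain p s where s_in: "\<forall>k. s k \<in> S" and app: "approaches_below p s a"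
    using islimpt_approached_below[OF well_ordered \<open>a islimpt S\<close>] by blast
  have "lex_less_upto p 0 a"
    using lex_le_lex_less_upto_trans nonneg s_in approaches_below_less[OF app] by blast
  then interpret approached_point S p s a
    using subsemigroup well_ordered s_in app by unfold_locales auto
  have "limit_depth lex_less S (Suc h) (deep_point (s 0) (Suc h))"
    using deep_point_limit_depth s_in by blast
  then show False using no_limit_depth_Suc[OF len mono transp_lex_less] by blast
qed

end
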